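(* Let $E\in M(m)$ be a real matrix all of whose eigenvalues have positive real parts, and let $H\in M(n)$. Let $h:\mathbb{R}^m\to M(n,\mathbb{C})$ be measurable and such that, for every $c>0$, $h(c^{E}x)=c^{H}h(x)$ for Lebesgue-a.e. $x\in\mathbb{R}^m$ (the null set may depend on $c$). Then there exists an $(E,H)$-left-homogeneous function $\varphi$ with $\varphi(x)=h(x)$ for Lebesgue-a.e. $x$.
   Context: For a square matrix $M$ and $c>0$, $c^{M}:=\sum_{k\ge0}(\log c)^kM^k/k!$. A function $\varphi:\mathbb{R}^m\to M(n,\mathbb{C})$ is called $(E,H)$-left-homogeneous if $\varphi(c^{E}x)=c^{H}\varphi(x)$ for all $c>0$ and all $x\in\mathbb{R}^m\setminus\{0\}$. *)

theory Defs
  imports "HOL-Analysis.Analysis"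
begin

definition mat_pow :: "('a::semiring_1)^'n^'n \<Rightarrow> nat \<Rightarrow> 'a^'n^'n" where
  "mat_pow M k = (((**) M) ^^ k) (mat 1)"

definition mat_cpow :: "real \<Rightarrow> real^'n^'n \<Rightarrow> real^'n^'n" where
  "mat_cpow c M = (\<Sum>k. ((ln c) ^ k / fact k) *\<^sub>R mat_pow M k)"

definition cmat :: "real^'n^'n \<Rightarrow> complex^'n^'n" where
  "cmat M = (\<chi> i j. complex_of_real (M $ i $ j))"

definition is_eigenvalue :: "real^'n^'n \<Rightarrow> complex \<Rightarrow> bool" where
  "is_eigenvalue M l \<longleftrightarrow> (\<exists>v::complex^'n. v \<noteq> 0 \<and> cmat M *v v = l *s v)"

definition left_homogeneous ::
  "real^'m^'m \<Rightarrow> real^'n^'n \<Rightarrow> (real^'m \<Rightarrow> complex^'n^'n) \<Rightarrow> bool" where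
  "left_homogeneous E H \<phi> \<longleftrightarrow>
     (\<forall>c>0. \<forall>x. x \<noteq> 0 \<longrightarrow> \<phi> (mat_cpow c E *v x) = cmat (mat_cpow c H) ** \<phi> x)"

end

theory Submission
  imports Defs
begin

(* The families c \<mapsto> c^E and
   c \<mapsto> c^H are actions of the multiplicative group (0,\<infinity>): 1^E = 1 and
   (cd)^E = c^E d^E, by the exponential law for the matrix exponential series.
   Given this, the theorem is about measurable functions that are a.e.
   equivariant for a measurable action of (0,\<infinity>). Replace h by a Borel function g with h = g a.e.; g is still a.e.
      equivariant for every c, since c^E is an invertible linear map.
   2. Call x good if g(c^E x) = c^H g(x) for a.e. c > 0.  By Fubini, a.e. x is
      good; and if x and d^E x are both good then g(d^E x) = d^H g(x), as both
      sides are linked through the identity at a common good c.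
   3. Hence phi(d^E x) = d^H g(x) (x good) is well defined on the orbits of the
      good points; extended by 0 to the other orbits it is homogeneous
      everywhere and agrees with g on the good points. *)

lemma bilinear_expansion:
  fixes x :: "'a::euclidean_space" and y :: "'b::euclidean_space"
  assumes "bilinear bil_op"
  shows "bil_op x y = (\<Sum>u\<in>Basis. \<Sum>v\<in>Basis. ((x \<bullet> u) * (y \<bullet> v)) *\<^sub>R bil_op u v)"
proof -
  have "bil_op x y = bil_op (\<Sum>u\<in>Basis. (x \<bullet> u) *\<^sub>R u) (\<Sum>v\<in>Basis. (y \<bullet> v) *\<^sub>R v)"
    by (simp add: euclidean_representation)
  also have "\<dots> = (\<Sum>(u, v)\<in>Basis \<times> Basis. bil_op ((x \<bullet> u) *\<^sub>R u) ((y \<bullet> v) *\<^sub>R v))"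
    by (rule bilinear_sum[OF assms])
  also have "\<dots> = (\<Sum>u\<in>Basis. \<Sum>v\<in>Basis. ((x \<bullet> u) * (y \<bullet> v)) *\<^sub>R bil_op u v)"
    by (simp add: sum.cartesian_product bilinear_lmul[OF assms] bilinear_rmul[OF assms] mult.commute)
  finally show ?thesis .
qed

text \<open>Cauchy product theorem for a bilinear map between Euclidean spaces, reduced
  coordinatewise to the scalar Cauchy product.  It yields the exponential law for matrix
  exponentials (matrix multiplication is not the product of a normed algebra type).\<close>
lemma bilinear_Cauchy_product_sums:
  fixes a :: "nat \<Rightarrow> 'a::euclidean_space" and b :: "nat \<Rightarrow> 'b::euclidean_space"
    and bil_op :: "'a \<Rightarrow> 'b \<Rightarrow> 'c::real_normed_vector"
  assumes bil: "bilinear bil_op"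
    and a: "summable (\<lambda>k. norm (a k))" and b: "summable (\<lambda>k. norm (b k))"
  shows "(\<lambda>k. \<Sum>i\<le>k. bil_op (a i) (b (k - i))) sums bil_op (\<Sum>k. a k) (\<Sum>k. b k)"
proof -
  have coord: "summable (\<lambda>k. norm (x k \<bullet> u))" and coord_sums: "(\<lambda>k. x k \<bullet> u) sums ((\<Sum>k. x k) \<bullet> u)"
    if "summable (\<lambda>k. norm (x k))" "u \<in> Basis" for x :: "nat \<Rightarrow> 'd::euclidean_space" and u
  proof -
    show "summable (\<lambda>k. norm (x k \<bullet> u))"
      by (rule summable_comparison_test'[OF that(1)]) (simp add: Basis_le_norm that(2))
    show "(\<lambda>k. x k \<bullet> u) sums ((\<Sum>k. x k) \<bullet> u)"
      using bounded_linear.sums[OF bounded_linear_inner_left summable_sums[OF summable_norm_cancel[OF that(1)]]] .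
  qed
  have coord_product: "(\<lambda>k. \<Sum>i\<le>k. (a i \<bullet> u) * (b (k - i) \<bullet> v)) sums (((\<Sum>k. a k) \<bullet> u) * ((\<Sum>k. b k) \<bullet> v))"
    if "u \<in> Basis" "v \<in> Basis" for u v
    using Cauchy_product_sums[OF coord[OF a that(1)] coord[OF b that(2)]]
      sums_unique[OF coord_sums[OF a that(1)]] sums_unique[OF coord_sums[OF b that(2)]] by simp
  have "(\<lambda>k. \<Sum>u\<in>Basis. \<Sum>v\<in>Basis. (\<Sum>i\<le>k. (a i \<bullet> u) * (b (k - i) \<bullet> v)) *\<^sub>R bil_op u v)
      sums (\<Sum>u\<in>Basis. \<Sum>v\<in>Basis. (((\<Sum>k. a k) \<bullet> u) * ((\<Sum>k. b k) \<bullet> v)) *\<^sub>R bil_op u v)"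
    by (intro sums_sum) (simp add: sums_scaleR_left coord_product)
  moreover have "(\<Sum>i\<le>k. bil_op (a i) (b (k - i))) =
      (\<Sum>u\<in>Basis. \<Sum>v\<in>Basis. (\<Sum>i\<le>k. (a i \<bullet> u) * (b (k - i) \<bullet> v)) *\<^sub>R bil_op u v)" for k
    unfolding bilinear_expansion[OF bil, of "a _"] scaleR_sum_left
    by (subst sum.swap, rule sum.cong[OF refl], rule sum.swap)
  ultimately show ?thesis
    by (simp only: bilinear_expansion[OF bil, of "\<Sum>k. a k"])
qed

lemma mat_pow_Suc: "mat_pow M (Suc k) = M ** mat_pow M k"
  by (simp add: mat_pow_def)

lemma mat_pow_add: "mat_pow (M::real^'n^'n) i ** mat_pow M j = mat_pow M (i + j)"
  by (induction i) (simp_all add: mat_pow_def matrix_mul_assoc[symmetric])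

lemma bilinear_matrix_mult: "bilinear ((**) :: real^'n^'n \<Rightarrow> real^'n^'n \<Rightarrow> real^'n^'n)"
  unfolding bilinear_def
  by (auto intro!: linearI simp: matrix_add_ldistrib matrix_matrix_mult_def vec_eq_iff
      sum.distrib distrib_right distrib_left sum_distrib_left mult_ac)

lemma norm_mat_pow_le: "\<exists>B. \<forall>k. norm (mat_pow (M::real^'n^'n) k) \<le> norm (mat 1 :: real^'n^'n) * B ^ k"
proof -
  obtain K where K: "\<And>(X::real^'n^'n) (Y::real^'n^'n). norm (X ** Y) \<le> norm X * norm Y * K" "K > 0"
    using bounded_bilinear.pos_bounded[OF bilinear_matrix_mult[unfolded bilinear_conv_bounded_bilinear]]
    by blast
  have "norm (mat_pow M k) \<le> norm (mat 1 :: real^'n^'n) * (K * norm M) ^ k" for k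
  proof (induction k)
    case (Suc k)
    have "norm (mat_pow M (Suc k)) \<le> norm M * norm (mat_pow M k) * K"
      unfolding mat_pow_Suc by (rule K(1))
    also have "\<dots> \<le> norm M * (norm (mat 1 :: real^'n^'n) * (K * norm M) ^ k) * K"
      using Suc K by (intro mult_right_mono mult_left_mono) auto
    finally show ?case by (simp add: mult_ac)
  qed (simp add: mat_pow_def)
  then show ?thesis by blast
qed

definition mat_exp :: "real^'n^'n \<Rightarrow> real \<Rightarrow> real^'n^'n" where
  "mat_exp M t = (\<Sum>k. (t ^ k / fact k) *\<^sub>R mat_pow M k)"

text \<open>The exponential series converges absolutely, by comparison with the scalar one.\<close>
lemma mat_exp_summable_norm: "summable (\<lambda>k. norm ((t ^ k / fact k) *\<^sub>R mat_pow (M::real^'n^'n) k))"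
proof -
  obtain B where B: "\<And>k. norm (mat_pow M k) \<le> norm (mat 1 :: real^'n^'n) * B ^ k"
    using norm_mat_pow_le by blast
  have majorant: "summable (\<lambda>k. norm (mat 1 :: real^'n^'n) * (inverse (fact k) * (\<bar>t\<bar> * B) ^ k))"
    by (intro summable_mult summable_exp)
  have bound: "norm ((t ^ k / fact k) *\<^sub>R mat_pow M k)
      \<le> norm (mat 1 :: real^'n^'n) * (inverse (fact k) * (\<bar>t\<bar> * B) ^ k)" for k
  proof -
    have "norm ((t ^ k / fact k) *\<^sub>R mat_pow M k) = (\<bar>t\<bar> ^ k / fact k) * norm (mat_pow M k)"
      by (simp add: power_abs)
    also have "\<dots> \<le> (\<bar>t\<bar> ^ k / fact k) * (norm (mat 1 :: real^'n^'n) * B ^ k)"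
      by (intro mult_left_mono B) auto
    also have "\<dots> = norm (mat 1 :: real^'n^'n) * (inverse (fact k) * (\<bar>t\<bar> * B) ^ k)"
      by (simp add: power_mult_distrib field_simps)
    finally show ?thesis .
  qed
  show ?thesis
    by (rule summable_comparison_test'[OF majorant, of 0]) (simp only: real_norm_def abs_norm_cancel bound)
qed

lemma mat_exp_sums: "(\<lambda>k. (t ^ k / fact k) *\<^sub>R mat_pow (M::real^'n^'n) k) sums mat_exp M t"
  unfolding mat_exp_def using summable_norm_cancel[OF mat_exp_summable_norm] by (rule summable_sums)

lemma mat_exp_zero: "mat_exp (M::real^'n^'n) 0 = mat 1"
proof -
  have only_constant_term: "(\<lambda>k. ((0::real) ^ k / fact k) *\<^sub>R mat_pow M k) = (\<lambda>k. if k = 0 then mat 1 else 0)"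
    by (auto simp: mat_pow_def)
  have "(\<lambda>k. ((0::real) ^ k / fact k) *\<^sub>R mat_pow M k) sums mat 1"
    unfolding only_constant_term using sums_single[of 0 "\<lambda>_. mat 1 :: real^'n^'n"] by simp
  then show ?thesis
    using mat_exp_sums sums_unique2 by blast
qed

lemma mat_exp_add: "mat_exp (M::real^'n^'n) (s + t) = mat_exp M s ** mat_exp M t"
proof -
  have binomial: "(s + t) ^ k / fact k = (\<Sum>i\<le>k. s ^ i / fact i * (t ^ (k - i) / fact (k - i)))" for k
    using exp_series_add_commuting[of s t k] by (simp add: divide_inverse_commute)
  have "(\<Sum>i\<le>k. ((s ^ i / fact i) *\<^sub>R mat_pow M i) ** ((t ^ (k - i) / fact (k - i)) *\<^sub>R mat_pow M (k - i)))
      = ((s + t) ^ k / fact k) *\<^sub>R mat_pow M k" for k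
    by (simp add: binomial scaleR_sum_left bilinear_lmul[OF bilinear_matrix_mult]
        bilinear_rmul[OF bilinear_matrix_mult] mat_pow_add mult_ac)
  with bilinear_Cauchy_product_sums[OF bilinear_matrix_mult mat_exp_summable_norm[of s M] mat_exp_summable_norm[of t M]]
  have "(\<lambda>k. ((s + t) ^ k / fact k) *\<^sub>R mat_pow M k) sums (mat_exp M s ** mat_exp M t)"
    by (simp add: mat_exp_def)
  then show ?thesis
    using mat_exp_sums sums_unique2 by blast
qed

lemma mat_cpow_eq_mat_exp: "mat_cpow c M = mat_exp M (ln c)"
  by (simp add: mat_cpow_def mat_exp_def)

lemma mat_cpow_one: "mat_cpow 1 (M::real^'n^'n) = mat 1"
  by (simp add: mat_cpow_eq_mat_exp mat_exp_zero)

lemma mat_cpow_mult: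
  "c > 0 \<Longrightarrow> d > 0 \<Longrightarrow> mat_cpow (c * d) (M::real^'n^'n) = mat_cpow c M ** mat_cpow d M"
  by (simp add: mat_cpow_eq_mat_exp ln_mult mat_exp_add)

lemma borel_measurable_mat_cpow: "(\<lambda>c. mat_cpow c (M::real^'n^'n)) \<in> borel_measurable borel"
proof (rule borel_measurable_LIMSEQ_metric)
  show "(\<lambda>c. \<Sum>k<n. (ln c ^ k / fact k) *\<^sub>R mat_pow M k) \<in> borel_measurable borel" for n
    by (intro borel_measurable_sum borel_measurable_scaleR borel_measurable_const borel_measurable_divide
        borel_measurable_power borel_measurable_ln measurable_ident_sets) auto
  show "(\<lambda>n. \<Sum>k<n. (ln c ^ k / fact k) *\<^sub>R mat_pow M k) \<longlonglongrightarrow> mat_cpow c M" for c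
    using mat_exp_sums[of "ln c" M] by (simp add: sums_def mat_cpow_eq_mat_exp)
qed

lemma cmat_mult: "cmat (A ** B) = cmat A ** cmat B"
  by (simp add: cmat_def matrix_matrix_mult_def vec_eq_iff)

lemma continuous_cmat: "continuous_on UNIV cmat"
  unfolding cmat_def by (intro continuous_intros)

lemma cmat_one: "cmat (mat 1) = mat 1"
  by (simp add: cmat_def mat_def vec_eq_iff)

locale pos_reals_action =
  fixes act :: "real \<Rightarrow> 'a \<Rightarrow> 'a"
  assumes act_one: "act 1 x = x"
    and act_mult: "0 < c \<Longrightarrow> 0 < d \<Longrightarrow> act (c * d) x = act c (act d x)"
begin

lemma act_inverse: "0 < c \<Longrightarrow> act (1 / c) (act c x) = x"
  using act_mult[of "1 / c" c x] by (simp add: act_one)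

lemma act_eq_imp:
  assumes "0 < c" "0 < d" "act c x = act d y"
  shows "y = act (c / d) x"
proof -
  have "y = act (1 / d) (act c x)"
    using act_inverse[of d y] assms by simp
  also have "\<dots> = act (c / d) x"
    using act_mult[of "1 / d" c x] assms by simp
  finally show ?thesis .
qed

end

lemma mat_cpow_action: "pos_reals_action (\<lambda>c x. mat_cpow c (E::real^'m^'m) *v x)"
  by unfold_locales (simp_all add: mat_cpow_one mat_cpow_mult matrix_vector_mul_assoc)

lemma cmat_cpow_action: "pos_reals_action (\<lambda>c (M::complex^'n^'n). cmat (mat_cpow c (H::real^'n^'n)) ** M)"
  by unfold_locales (simp_all add: mat_cpow_one cmat_one mat_cpow_mult cmat_mult matrix_mul_assoc)

lemma equivariant_extension:
  fixes act :: "real \<Rightarrow> 'a \<Rightarrow> 'a" and lin :: "real \<Rightarrow> 'b::zero \<Rightarrow> 'b"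
  assumes act: "pos_reals_action act" and lin: "pos_reals_action lin"
    and lin_zero: "\<And>c. lin c 0 = 0"
    and consistent: "\<And>x d. x \<in> S \<Longrightarrow> act d x \<in> S \<Longrightarrow> 0 < d \<Longrightarrow> g (act d x) = lin d (g x)"
  shows "\<exists>\<phi>. (\<forall>c>0. \<forall>y. \<phi> (act c y) = lin c (\<phi> y)) \<and> (\<forall>x\<in>S. \<phi> x = g x)"
proof -
  interpret act: pos_reals_action act by (rule act)
  interpret lin: pos_reals_action lin by (rule lin)
  define orbit_rep where "orbit_rep y = (\<lambda>(x, d). x \<in> S \<and> 0 < d \<and> y = act d x)" for y
  have well_defined: "lin d (g x) = lin d' (g x')"
    if "orbit_rep y (x, d)" "orbit_rep y (x', d')" for y x d x' d'
  proof -
    from that have x: "x \<in> S" "0 < d" and x': "x' \<in> S" "0 < d'" and "act d x = act d' x'"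
      by (auto simp: orbit_rep_def)
    then have x'_eq: "x' = act (d / d') x"
      by (intro act.act_eq_imp)
    then have "g x' = lin (d / d') (g x)"
      using consistent[of x "d / d'"] x x' by simp
    then have "lin d' (g x') = lin d' (lin (d / d') (g x))" by simp
    also have "\<dots> = lin (d' * (d / d')) (g x)"
      by (rule lin.act_mult[symmetric]) (use x x' in simp_all)
    also have "d' * (d / d') = d" using x' by simp
    finally show ?thesis by simp
  qed
  define \<phi> where
    "\<phi> y = (if Ex (orbit_rep y) then case_prod (\<lambda>x d. lin d (g x)) (Eps (orbit_rep y)) else 0)" for y
  have \<phi>_rep: "\<phi> y = lin d (g x)" if rep: "orbit_rep y (x, d)" for y x d
  proof -
    obtain x0 d0 where chosen: "Eps (orbit_rep y) = (x0, d0)" by fastforce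
    have "orbit_rep y (x0, d0)"
      using someI[of "orbit_rep y", OF rep] by (simp add: chosen)
    moreover have "\<phi> y = lin d0 (g x0)"
      using rep by (auto simp: \<phi>_def chosen)
    ultimately show ?thesis
      using well_defined[OF _ rep] by simp
  qed
  have orbit_act: "Ex (orbit_rep (act c y)) \<longleftrightarrow> Ex (orbit_rep y)" if c: "0 < c" for c y
  proof
    assume "Ex (orbit_rep (act c y))"
    then obtain x d where x: "x \<in> S" "0 < d" and "act d x = act c y" by (auto simp: orbit_rep_def)
    then have "y = act (d / c) x" using c by (intro act.act_eq_imp)
    then have "orbit_rep y (x, d / c)" using x c by (simp add: orbit_rep_def)
    then show "Ex (orbit_rep y)" by blast
  next
    assume "Ex (orbit_rep y)"
    then obtain x d where x: "x \<in> S" "0 < d" and "y = act d x" by (auto simp: orbit_rep_def)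
    then have "orbit_rep (act c y) (x, c * d)" using c by (simp add: orbit_rep_def act.act_mult)
    then show "Ex (orbit_rep (act c y))" by blast
  qed
  have "\<phi> (act c y) = lin c (\<phi> y)" if c: "0 < c" for c y
  proof (cases "Ex (orbit_rep y)")
    case True
    then obtain x d where rep: "orbit_rep y (x, d)" by auto
    then have d: "0 < d" and rep': "orbit_rep (act c y) (x, c * d)"
      using c by (auto simp: orbit_rep_def act.act_mult)
    have "\<phi> (act c y) = lin (c * d) (g x)" by (rule \<phi>_rep[OF rep'])
    also have "\<dots> = lin c (\<phi> y)" using c d by (simp add: \<phi>_rep[OF rep] lin.act_mult)
    finally show ?thesis .
  next
    case False
    then show ?thesis using orbit_act[OF c] by (simp add: \<phi>_def lin_zero)
  qed
  moreover have "\<phi> x = g x" if "x \<in> S" for x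
    using \<phi>_rep[of x x 1] that by (simp add: orbit_rep_def act.act_one lin.act_one)
  ultimately show ?thesis by blast
qed

lemma completion_ex_borel_measurable_euclidean:
  fixes f :: "'a \<Rightarrow> 'b::euclidean_space"
  assumes f: "f \<in> borel_measurable (completion M)"
  shows "\<exists>g\<in>borel_measurable M. AE x in M. f x = g x"
proof -
  have "(\<lambda>x. f x \<bullet> b) \<in> borel_measurable (completion M)" for b
    using f by (rule borel_measurable_inner) simp
  then have "\<forall>b. \<exists>g. g \<in> borel_measurable M \<and> (AE x in M. f x \<bullet> b = g x)"
    using completion_ex_borel_measurable_real by blast
  from choice[OF this] obtain g
    where "\<forall>b. g b \<in> borel_measurable M \<and> (AE x in M. f x \<bullet> b = g b x)" by blast
  then have g_meas: "\<And>b. g b \<in> borel_measurable M" and g_ae: "\<And>b. AE x in M. f x \<bullet> b = g b x"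
    by auto
  have "AE x in M. \<forall>b\<in>Basis. f x \<bullet> b = g b x"
    using AE_finite_allI[OF finite_Basis g_ae] .
  then have "AE x in M. f x = (\<Sum>b\<in>Basis. g b x *\<^sub>R b)"
  proof eventually_elim
    case (elim x)
    have "f x = (\<Sum>b\<in>Basis. (f x \<bullet> b) *\<^sub>R b)"
      by (rule euclidean_representation[symmetric])
    also have "\<dots> = (\<Sum>b\<in>Basis. g b x *\<^sub>R b)"
      using elim by (intro sum.cong) simp_all
    finally show ?case .
  qed
  moreover have "(\<lambda>x. \<Sum>b\<in>Basis. g b x *\<^sub>R b) \<in> borel_measurable M"
    by (intro borel_measurable_sum borel_measurable_scaleR g_meas borel_measurable_const)
  ultimately show ?thesis by (rule bexI)
qed

text \<open>Almost-everywhere properties are preserved under pulling back along an invertible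
  linear map (whose inverse, being linear, maps null sets to null sets).\<close>
lemma AE_linear_vimage:
  fixes A B :: "real^'m^'m"
  assumes ae: "AE x in lebesgue. P x" and inverse: "\<And>x. B *v (A *v x) = x"
  shows "AE x in lebesgue. P (A *v x)"
proof -
  obtain N where "{x \<in> space lebesgue. \<not> P x} \<subseteq> N" "emeasure lebesgue N = 0" "N \<in> sets lebesgue"
    using ae by (rule AE_E)
  then have N: "{x \<in> space lebesgue. \<not> P x} \<subseteq> N" "N \<in> null_sets lebesgue"
    by (auto intro: null_setsI)
  then have "negligible N" by (simp add: negligible_iff_null_sets)
  then have "negligible ((*v) B ` N)"
    by (intro negligible_differentiable_image_negligible bounded_linear_imp_differentiable_on) auto
  moreover have "{x \<in> space lebesgue. \<not> P (A *v x)} \<subseteq> (*v) B ` N"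
  proof
    fix x assume "x \<in> {x \<in> space lebesgue. \<not> P (A *v x)}"
    then have "A *v x \<in> N" using N(1) by auto
    then show "x \<in> (*v) B ` N" using inverse[of x] by (metis image_eqI)
  qed
  ultimately show ?thesis
    by (intro AE_I'[where N = "(*v) B ` N"]) (auto simp: negligible_iff_null_sets)
qed

lemma AE_equation_transfer:
  fixes A B :: "real^'m^'m" and h g :: "real^'m \<Rightarrow> 'b"
  assumes h_g: "AE x in lebesgue. h x = g x" and inverse: "\<And>x. B *v (A *v x) = x"
    and h_eq: "AE x in lebesgue. h (A *v x) = T (h x)"
  shows "AE x in lborel. g (A *v x) = T (g x)"
proof -
  have "AE x in lebesgue. h (A *v x) = g (A *v x)"
    using AE_linear_vimage[OF h_g inverse] .
  with h_eq h_g have "AE x in lebesgue. g (A *v x) = T (g x)"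
    by eventually_elim simp
  then show ?thesis
    by (simp add: AE_completion_iff)
qed

lemma AE_pos_ex:
  assumes "AE c in lborel. (c::real) > 0 \<longrightarrow> P c"
  shows "\<exists>c>0. P c"
proof (rule ccontr)
  assume "\<not> (\<exists>c>0. P c)"
  obtain N where N: "{c \<in> space lborel. \<not> (c > 0 \<longrightarrow> P c)} \<subseteq> N" "emeasure lborel N = 0" "N \<in> sets lborel"
    using assms by (rule AE_E)
  with \<open>\<not> (\<exists>c>0. P c)\<close> have "emeasure lborel {0<..1::real} \<le> emeasure lborel N"
    by (intro emeasure_mono) auto
  then show False using N(2) by simp
qed

lemma AE_pos_dilate:
  fixes P :: "real \<Rightarrow> bool"
  assumes P: "Measurable.pred borel P" and ae: "AE c in lborel. 0 < c \<longrightarrow> P c" and d: "0 < d"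
  shows "AE c in lborel. 0 < c \<longrightarrow> P (d * c)"
proof -
  have "Measurable.pred borel (\<lambda>c. 0 < c \<longrightarrow> P c)"
    using P by measurable
  then have "AE c in lborel. 0 < 0 + d * c \<longrightarrow> P (0 + d * c)"
    using ae d by (intro AE_borel_affine) auto
  then show ?thesis
  proof eventually_elim
    case (elim c)
    show ?case
    proof
      assume "0 < c"
      with d have "0 < d * c" by simp
      with elim show "P (d * c)" by simp
    qed
  qed
qed

definition good_point ::
  "(real \<Rightarrow> real^'m^'m) \<Rightarrow> (real \<Rightarrow> complex^'n^'n) \<Rightarrow> (real^'m \<Rightarrow> complex^'n^'n) \<Rightarrow> real^'m \<Rightarrow> bool"
  where "good_point A C g x \<longleftrightarrow> (AE c in lborel. 0 < c \<longrightarrow> g (A c *v x) = C c ** g x)"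

text \<open>Fubini: if for each c the identity holds for a.e. x, then a.e. x is good.\<close>
lemma AE_good_point:
  fixes A :: "real \<Rightarrow> real^'m^'m" and C :: "real \<Rightarrow> complex^'n^'n" and g :: "real^'m \<Rightarrow> complex^'n^'n"
  assumes [measurable]: "A \<in> borel_measurable borel" "C \<in> borel_measurable borel" "g \<in> borel_measurable borel"
    and ae: "\<And>c. 0 < c \<Longrightarrow> AE x in lborel. g (A c *v x) = C c ** g x"
  shows "AE x in lborel. good_point A C g x"
proof -
  have "continuous_on UNIV (\<lambda>p. fst p *v (snd p :: real^'m))"
    "continuous_on UNIV (\<lambda>p. fst p ** (snd p :: complex^'n^'n))"
    unfolding matrix_vector_mult_def matrix_matrix_mult_def by (intro continuous_intros)+
  note continuous = this
  have [measurable]: "(\<lambda>p::real \<times> (real^'m). A (fst p) *v snd p) \<in> borel_measurable (lborel \<Otimes>\<^sub>M lborel)"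
    by (rule borel_measurable_continuous_Pair[OF _ _ continuous(1)]) measurable
  have [measurable]: "(\<lambda>p::real \<times> (real^'m). C (fst p) ** g (snd p)) \<in> borel_measurable (lborel \<Otimes>\<^sub>M lborel)"
    by (rule borel_measurable_continuous_Pair[OF _ _ continuous(2)]) measurable
  define P where "P c x \<longleftrightarrow> (0 < c \<longrightarrow> g (A c *v x) = C c ** g x)" for c x
  have P_sets: "{p \<in> space (lborel \<Otimes>\<^sub>M lborel). P (fst p) (snd p)} \<in> sets (lborel \<Otimes>\<^sub>M (lborel :: (real^'m) measure))"
    unfolding P_def by measurable
  have "AE x in lborel. P c x" for c
    by (cases "0 < c") (simp_all add: P_def ae)
  then have "AE c in lborel. AE x in lborel. P c x"
    by (rule AE_I2)
  moreover have "pair_sigma_finite lborel (lborel :: (real^'m) measure)"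
    by (simp add: pair_sigma_finite_def lborel.sigma_finite_measure_axioms)
  ultimately have "AE x in lborel. AE c in lborel. P c x"
    using pair_sigma_finite.AE_commute[OF _ P_sets] by blast
  then show ?thesis
    by (simp only: good_point_def P_def)
qed

text \<open>Indeed, for a common good c the identities at A d x and (rescaled) at x give
  C c g(A d x) = g(A (c d) x) = C c C d g(x), and C c is invertible.\<close>
lemma good_point_consistent:
  fixes A :: "real \<Rightarrow> real^'m^'m" and C :: "real \<Rightarrow> complex^'n^'n" and g :: "real^'m \<Rightarrow> complex^'n^'n"
  assumes A_meas: "A \<in> borel_measurable borel" and C_meas: "C \<in> borel_measurable borel"
    and g_meas: "g \<in> borel_measurable borel"
    and A: "pos_reals_action (\<lambda>c x. A c *v x)" and C: "pos_reals_action (\<lambda>c (M::complex^'n^'n). C c ** M)"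
    and good: "good_point A C g x" "good_point A C g (A d *v x)" and d: "0 < d"
  shows "g (A d *v x) = C d ** g x"
proof -
  interpret A: pos_reals_action "\<lambda>c x. A c *v x" by (rule A)
  interpret C: pos_reals_action "\<lambda>c (M::complex^'n^'n). C c ** M" by (rule C)
  have "continuous_on UNIV (\<lambda>M::real^'m^'m. M *v x)" "continuous_on UNIV (\<lambda>M::complex^'n^'n. M ** g x)"
    unfolding matrix_vector_mult_def matrix_matrix_mult_def by (intro continuous_intros)+
  note continuous = this[THEN borel_measurable_continuous_onI]
  have [measurable]: "(\<lambda>c. g (A c *v x)) \<in> borel_measurable borel"
    using measurable_compose[OF measurable_compose[OF A_meas continuous(1)] g_meas] by simp
  have [measurable]: "(\<lambda>c. C c ** g x) \<in> borel_measurable borel"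
    using measurable_compose[OF C_meas continuous(2)] by simp
  have "Measurable.pred borel (\<lambda>c. g (A c *v x) = C c ** g x)"
    by measurable
  from AE_pos_dilate[OF this _ d] good(1)
  have "AE c in lborel. 0 < c \<longrightarrow> g (A (d * c) *v x) = C (d * c) ** g x"
    unfolding good_point_def by blast
  with good(2) have "AE c in lborel. 0 < c \<longrightarrow>
      g (A c *v (A d *v x)) = C c ** g (A d *v x) \<and> g (A (d * c) *v x) = C (d * c) ** g x"
    unfolding good_point_def by eventually_elim blast
  from AE_pos_ex[OF this] obtain c where c: "0 < c" "g (A c *v (A d *v x)) = C c ** g (A d *v x)"
    "g (A (d * c) *v x) = C (d * c) ** g x"
    by blast
  have "C c ** g (A d *v x) = g (A c *v (A d *v x))"
    using c(2) by simp
  also have "\<dots> = g (A (c * d) *v x)"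
    using c(1) d by (simp add: A.act_mult)
  also have "\<dots> = C (c * d) ** g x"
    using c(3) by (simp add: mult.commute)
  also have "\<dots> = C c ** (C d ** g x)"
    using c(1) d by (simp add: C.act_mult)
  finally have "C (1 / c) ** (C c ** g (A d *v x)) = C (1 / c) ** (C c ** (C d ** g x))"
    by simp
  then show ?thesis
    using C.act_inverse[OF c(1)] by simp
qed

lemma equivariant_version:
  fixes A :: "real \<Rightarrow> real^'m^'m" and C :: "real \<Rightarrow> complex^'n^'n" and g :: "real^'m \<Rightarrow> complex^'n^'n"
  assumes A_meas: "A \<in> borel_measurable borel" and C_meas: "C \<in> borel_measurable borel"
    and g_meas: "g \<in> borel_measurable borel"
    and A: "pos_reals_action (\<lambda>c x. A c *v x)" and C: "pos_reals_action (\<lambda>c (M::complex^'n^'n). C c ** M)"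
    and ae: "\<And>c. 0 < c \<Longrightarrow> AE x in lborel. g (A c *v x) = C c ** g x"
  shows "\<exists>\<phi>. (\<forall>c>0. \<forall>y. \<phi> (A c *v y) = C c ** \<phi> y) \<and> (AE x in lborel. \<phi> x = g x)"
proof -
  obtain \<phi> where \<phi>: "\<forall>c>0. \<forall>y. \<phi> (A c *v y) = C c ** \<phi> y"
    and on_good: "\<And>x. good_point A C g x \<Longrightarrow> \<phi> x = g x"
    using equivariant_extension[OF A C, of "{x. good_point A C g x}" g]
      good_point_consistent[OF A_meas C_meas g_meas A C] by auto
  have "AE x in lborel. good_point A C g x"
    using A_meas C_meas g_meas ae by (rule AE_good_point)
  then have "AE x in lborel. \<phi> x = g x"
    by (rule eventually_mono) (rule on_good)
  with \<phi> show ?thesis by blast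
qed

theorem mainTheorem2:
  fixes E :: "real^'m^'m" and H :: "real^'n^'n" and h :: "real^'m \<Rightarrow> complex^'n^'n"
  assumes "\<forall>l. is_eigenvalue E l \<longrightarrow> Re l > 0"
    and "h \<in> borel_measurable lebesgue"
    and "\<forall>c>0. AE x in lebesgue. h (mat_cpow c E *v x) = cmat (mat_cpow c H) ** h x"
  shows "\<exists>\<phi>. left_homogeneous E H \<phi> \<and> (AE x in lebesgue. \<phi> x = h x)"
proof -
  let ?A = "\<lambda>c. mat_cpow c E" and ?C = "\<lambda>c. cmat (mat_cpow c H)"
  interpret A: pos_reals_action "\<lambda>c x. ?A c *v x" by (rule mat_cpow_action)
  have A_meas: "?A \<in> borel_measurable borel" and C_meas: "?C \<in> borel_measurable borel"
    using borel_measurable_mat_cpow[of E]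
      measurable_compose[OF borel_measurable_mat_cpow borel_measurable_continuous_onI[OF continuous_cmat]]
    by auto
  obtain g where "g \<in> borel_measurable lborel" and h_g_lborel: "AE x in lborel. h x = g x"
    using completion_ex_borel_measurable_euclidean[OF assms(2)] by blast
  then have g_meas: "g \<in> borel_measurable borel" by simp
  have h_g: "AE x in lebesgue. h x = g x"
    using h_g_lborel by (rule AE_completion)
  have g_equivariant_ae: "AE x in lborel. g (?A c *v x) = ?C c ** g x" if "0 < c" for c
    using AE_equation_transfer[OF h_g A.act_inverse[OF that]] assms(3) that by blast
  obtain \<phi> where \<phi>_equivariant: "\<forall>c>0. \<forall>y. \<phi> (?A c *v y) = ?C c ** \<phi> y"
    and \<phi>_g: "AE x in lborel. \<phi> x = g x"
    using equivariant_version[OF A_meas C_meas g_meas mat_cpow_action cmat_cpow_action g_equivariant_ae]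
    by blast
  have "left_homogeneous E H \<phi>"
    unfolding left_homogeneous_def using \<phi>_equivariant by blast
  moreover have "AE x in lebesgue. \<phi> x = h x"
    using AE_completion[OF \<phi>_g] h_g by eventually_elim simp
  ultimately show ?thesis by blast
qed

end
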